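(* Assume the setting and standing assumptions (A1), (A2) described in the context. If $\Psi^-$ is initially positive and $\Psi^+$ has a negative sign change, then the system exhibits microphase separation for every $\Delta\in\mathcal{D}$ (robust microphase separation).
   Context: Let $n,m\ge 1$, $B\in\mathbb{Z}^{n\times m}$, $C\in\mathbb{Z}^{m\times n}$. Given bounds $0\le \Delta_j^-\le \Delta_j^+<\infty$ ($j=1,\dots,m$), let $\mathcal{D}$ be the set of diagonal matrices $\Delta=\mathrm{diag}(\Delta_1,\dots,\Delta_m)$ with $\Delta_j^-\le\Delta_j\le\Delta_j^+$ for all $j$. Let $J_2,J_4\in\mathbb{R}^{n\times n}$ be symmetric. Standing assumptions: (A1) for every $\Delta\in\mathcal{D}$, the matrix $B\Delta C$ is singular and has $n-1$ eigenvalues (counted with multiplicity) with negative real part (so $0$ is a simple eigenvalue), and there is a nonzero vector $v\ge 0$ with $v^\top B=0$; (A2) $J_2$ is indefinite, $J_4$ is negative semidefinite, and there exists $\bar\kappa$ such that $\bar\kappa^2 J_2+\bar\kappa^4 J_4$ is negative definite. For real $\kappa\ge 0$ and $\Delta\in\mathcal{D}$ set $J(\Delta,\kappa)=B\Delta C+\kappa^2 J_2+\kappa^4 J_4$ and let $\rho(\Delta,\kappa)$ be its spectral abscissa (the maximum real part of its eigenvalues). Define $\Psi^-(\kappa)=\min_{\Delta\in\mathcal{D}}\det[-J(\Delta,\kappa)]$ and $\Psi^+(\kappa)=\max_{\Delta\in\mathcal{D}}\det[-J(\Delta,\kappa)]$. A continuous function $f$ on $[0,\infty)$ is initially positive if there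 is $\hat\kappa>0$ with $f>0$ on $(0,\hat\kappa)$; it has a negative sign change if $f(\kappa_1)>0>f(\kappa_2)$ for some $\kappa_1<\kappa_2$. For a given $\Delta\in\mathcal{D}$, the system exhibits microphase separation (MS) if there exists $\hat\kappa>0$ with $\rho(\Delta,\kappa)<0$ for all $\kappa\in(0,\hat\kappa)$, and there exist $\hat\kappa<\kappa_1<\kappa_2$ with $\rho(\Delta,\kappa_1)>0$ and $\rho(\Delta,\kappa_2)<0$. *)

theory Defs
  imports "Jordan_Normal_Form.Char_Poly" "HOL-Computational_Algebra.Polynomial"
begin

definition cmat :: "real mat \<Rightarrow> complex mat" where
  "cmat A = map_mat complex_of_real A"

definition spectral_abscissa :: "real mat \<Rightarrow> real" where
  "spectral_abscissa A = Max (Re ` {z. eigenvalue (cmat A) z})"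

definition n_neg_eigs :: "real mat \<Rightarrow> nat" where
  "n_neg_eigs A = (\<Sum>z \<in> {z. eigenvalue (cmat A) z \<and> Re z < 0}. order z (char_poly (cmat A)))"

definition Dset :: "nat \<Rightarrow> (nat \<Rightarrow> real) \<Rightarrow> (nat \<Rightarrow> real) \<Rightarrow> real mat set" where
  "Dset m lo hi = {D \<in> carrier_mat m m. diagonal_mat D \<and> (\<forall>j<m. lo j \<le> D $$ (j,j) \<and> D $$ (j,j) \<le> hi j)}"

definition Jmat :: "real mat \<Rightarrow> real mat \<Rightarrow> real mat \<Rightarrow> real mat \<Rightarrow> real mat \<Rightarrow> real \<Rightarrow> real mat" where
  "Jmat B C J2 J4 D \<kappa> = B * D * C + (\<kappa>^2) \<cdot>\<^sub>m J2 + (\<kappa>^4) \<cdot>\<^sub>m J4"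

definition Psi_minus :: "nat \<Rightarrow> (nat \<Rightarrow> real) \<Rightarrow> (nat \<Rightarrow> real) \<Rightarrow> real mat \<Rightarrow> real mat \<Rightarrow> real mat \<Rightarrow> real mat \<Rightarrow> real \<Rightarrow> real" where
  "Psi_minus m lo hi B C J2 J4 \<kappa> = Inf ((\<lambda>D. det (- Jmat B C J2 J4 D \<kappa>)) ` Dset m lo hi)"

definition Psi_plus :: "nat \<Rightarrow> (nat \<Rightarrow> real) \<Rightarrow> (nat \<Rightarrow> real) \<Rightarrow> real mat \<Rightarrow> real mat \<Rightarrow> real mat \<Rightarrow> real mat \<Rightarrow> real \<Rightarrow> real" where
  "Psi_plus m lo hi B C J2 J4 \<kappa> = Sup ((\<lambda>D. det (- Jmat B C J2 J4 D \<kappa>)) ` Dset m lo hi)"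

definition initially_positive :: "(real \<Rightarrow> real) \<Rightarrow> bool" where
  "initially_positive f \<longleftrightarrow> (\<exists>k>0. \<forall>\<kappa>\<in>{0<..<k}. f \<kappa> > 0)"

definition negative_sign_change :: "(real \<Rightarrow> real) \<Rightarrow> bool" where
  "negative_sign_change f \<longleftrightarrow> (\<exists>k1 k2. 0 \<le> k1 \<and> k1 < k2 \<and> f k1 > 0 \<and> f k2 < 0)"

definition microphase_separation :: "(real \<Rightarrow> real) \<Rightarrow> bool" where
  "microphase_separation \<rho> \<longleftrightarrow>
     (\<exists>k>0. (\<forall>\<kappa>\<in>{0<..<k}. \<rho> \<kappa> < 0) \<and>
        (\<exists>k1 k2. k < k1 \<and> k1 < k2 \<and> \<rho> k1 > 0 \<and> \<rho> k2 < 0))"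

definition qform :: "real mat \<Rightarrow> real vec \<Rightarrow> real" where
  "qform A x = x \<bullet> (A *\<^sub>v x)"

definition indefinite_mat :: "nat \<Rightarrow> real mat \<Rightarrow> bool" where
  "indefinite_mat n A \<longleftrightarrow> (\<exists>x\<in>carrier_vec n. qform A x > 0) \<and> (\<exists>y\<in>carrier_vec n. qform A y < 0)"

definition neg_semidef :: "nat \<Rightarrow> real mat \<Rightarrow> bool" where
  "neg_semidef n A \<longleftrightarrow> (\<forall>x\<in>carrier_vec n. qform A x \<le> 0)"

definition neg_def :: "nat \<Rightarrow> real mat \<Rightarrow> bool" where
  "neg_def n A \<longleftrightarrow> (\<forall>x\<in>carrier_vec n. x \<noteq> 0\<^sub>v n \<longrightarrow> qform A x < 0)"

end

theory Submission
  imports Defs "HOL-Analysis.Elementary_Metric_Spaces" "HOL-Analysis.Function_Topology"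
begin

text \<open>Fix \<open>D\<close> and let \<open>p\<^sub>\<kappa>\<close> be the characteristic polynomial of
  \<open>J(\<kappa>) = B D C + \<kappa>\<^sup>2 J\<^sub>2 + \<kappa>\<^sup>4 J\<^sub>4\<close>.

  Small \<open>\<kappa>\<close>: by (A1), \<open>0\<close> is a simple root of \<open>p\<^sub>0\<close> and its only root in the closed right
  half-plane, hence \<open>p\<^sub>0'(0) > 0\<close>. Roots of \<open>p\<^sub>\<kappa>\<close> in the closed right half-plane stay bounded
  (Cauchy's bound), so as \<open>\<kappa> \<rightarrow> 0\<close> they can only accumulate at \<open>0\<close>. There the divided
  difference of \<open>p\<^sub>\<kappa>\<close> between such a root \<open>z\<close> and \<open>0\<close> (\<open>z\<close> real) or \<open>cnj z\<close> (\<open>z\<close> non-real) is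
  close to \<open>p\<^sub>0'(0) > 0\<close>, which is impossible once \<open>p\<^sub>\<kappa>(0) = det(-J(\<kappa>)) \<ge> \<Psi>\<^sup>-(\<kappa>) > 0\<close>.

  Where \<open>\<Psi>\<^sup>+(\<kappa>) < 0\<close>, the monic \<open>p\<^sub>\<kappa>\<close> is negative at \<open>0\<close> and so has a positive real root.

  Large \<open>\<kappa>\<close>: writing \<open>\<kappa> = t \<bar>\<kappa>\<^sub>0\<bar>\<close> with \<open>t \<ge> 1\<close>, where \<open>\<kappa>\<^sub>0\<^sup>2 J\<^sub>2 + \<kappa>\<^sub>0\<^sup>4 J\<^sub>4\<close> is negative
  definite, \<open>J\<^sub>4 \<le> 0\<close> gives \<open>x\<^sup>T J(\<kappa>) x \<le> (K - t\<^sup>2 c) |x|\<^sub>1\<^sup>2\<close>, so \<open>J(\<kappa>)\<close> is negative definite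
  and all its eigenvalues lie in the open left half-plane.\<close>

lemma cmat_carrier [simp]: "A \<in> carrier_mat n n \<Longrightarrow> cmat A \<in> carrier_mat n n"
  unfolding cmat_def by simp

lemma char_poly_cmat:
  "A \<in> carrier_mat n n \<Longrightarrow> char_poly (cmat A) = map_poly complex_of_real (char_poly A)"
  unfolding cmat_def by (rule of_real_hom.char_poly_hom)

lemma eigenvalue_cmat_iff:
  assumes "A \<in> carrier_mat n n"
  shows "eigenvalue (cmat A) z \<longleftrightarrow> poly (map_poly complex_of_real (char_poly A)) z = 0"
  using eigenvalue_root_char_poly[OF cmat_carrier[OF assms]] char_poly_cmat[OF assms] by simp

lemma lead_coeff_char_poly: "A \<in> carrier_mat n n \<Longrightarrow> lead_coeff (char_poly A) = 1"
  using degree_monic_char_poly[of A n] by simp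

lemma poly_char_poly_0:
  fixes A :: "'a::field mat"
  assumes "A \<in> carrier_mat n n"
  shows "poly (char_poly A) 0 = det (- A)"
proof -
  have "char_matrix A 0 = A"
    unfolding char_matrix_def by (rule eq_matI) (use assms in auto)
  then show ?thesis using char_poly_matrix[OF assms, of 0] by simp
qed

lemma finite_eigenvalues_cmat:
  assumes "A \<in> carrier_mat n n"
  shows "finite {z. eigenvalue (cmat A) z}"
proof -
  have "map_poly complex_of_real (char_poly A) \<noteq> 0"
    using lead_coeff_char_poly[OF assms] by auto
  then show ?thesis
    unfolding eigenvalue_cmat_iff[OF assms] by (rule poly_roots_finite)
qed

lemma eigenvalue_cmat_exists:
  assumes A: "A \<in> carrier_mat n n" and n: "n \<ge> 1"
  shows "\<exists>z. eigenvalue (cmat A) z"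
proof -
  obtain as where f: "char_poly (cmat A) = (\<Prod>a\<leftarrow>as. [:- a, 1:])" and l: "length as = n"
    using char_poly_factorized[OF cmat_carrier[OF A]] by blast
  from l n obtain a where a: "a \<in> set as" by (cases as) auto
  have "poly (char_poly (cmat A)) a = 0" unfolding f poly_prod_list
    using a by (induct as) auto
  then show ?thesis using eigenvalue_root_char_poly[OF cmat_carrier[OF A]] by blast
qed

lemma Re_eigenvalue_le_spectral_abscissa:
  assumes "A \<in> carrier_mat n n" and "eigenvalue (cmat A) z"
  shows "Re z \<le> spectral_abscissa A"
  unfolding spectral_abscissa_def using finite_eigenvalues_cmat[OF assms(1)] assms(2)
  by (intro Max_ge) auto

lemma spectral_abscissa_negI:
  assumes "A \<in> carrier_mat n n" and "n \<ge> 1" and "\<And>z. eigenvalue (cmat A) z \<Longrightarrow> Re z < 0"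
  shows "spectral_abscissa A < 0"
  unfolding spectral_abscissa_def
  using finite_eigenvalues_cmat[OF assms(1)] eigenvalue_cmat_exists[OF assms(1,2)] assms(3)
  by (subst Max_less_iff) auto

lemma poly_root_gt_if_neg:
  fixes p :: "real poly"
  assumes "lead_coeff p > 0" and "poly p a < 0"
  shows "\<exists>x>a. poly p x = 0"
proof -
  obtain X where X: "\<forall>x\<ge>X. lead_coeff p \<le> poly p x"
    using poly_pinfty_gt_lc[OF assms(1)] by blast
  define b where "b = max X (a + 1)"
  have "poly p b > 0" "a < b"
    using X assms(1) unfolding b_def by (auto intro: less_le_trans)
  then show ?thesis using poly_IVT_pos[of a b p] assms(2) by blast
qed

lemma spectral_abscissa_pos_if_det_neg:
  assumes A: "A \<in> carrier_mat n n" and "det (- A) < 0"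
  shows "spectral_abscissa A > 0"
proof -
  obtain x where x: "x > 0" "poly (char_poly A) x = 0"
    using poly_root_gt_if_neg[of "char_poly A" 0] assms
    by (auto simp: lead_coeff_char_poly poly_char_poly_0)
  then have "eigenvalue (cmat A) (complex_of_real x)"
    unfolding eigenvalue_cmat_iff[OF A] of_real_hom.poly_map_poly by simp
  with x(1) Re_eigenvalue_le_spectral_abscissa[OF A] show ?thesis by fastforce
qed

lemma qform_sum:
  assumes "A \<in> carrier_mat n n" and "x \<in> carrier_vec n"
  shows "qform A x = (\<Sum>i<n. \<Sum>j<n. x $ i * A $$ (i,j) * x $ j)"
  using assms
  by (simp add: qform_def scalar_prod_def lessThan_atLeast0 sum_distrib_left mult.assoc)

lemma qform_add:
  assumes "A \<in> carrier_mat n n" "B \<in> carrier_mat n n" "x \<in> carrier_vec n"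
  shows "qform (A + B) x = qform A x + qform B x"
proof -
  have "qform (A + B) x = (\<Sum>i<n. \<Sum>j<n. x $ i * (A + B) $$ (i,j) * x $ j)"
    by (rule qform_sum) (use assms in auto)
  also have "\<dots> = (\<Sum>i<n. \<Sum>j<n. x $ i * A $$ (i,j) * x $ j + x $ i * B $$ (i,j) * x $ j)"
    using assms by (intro sum.cong refl) (auto simp: algebra_simps)
  finally show ?thesis using assms by (simp add: qform_sum sum.distrib)
qed

lemma qform_smult:
  assumes "A \<in> carrier_mat n n" "x \<in> carrier_vec n"
  shows "qform (a \<cdot>\<^sub>m A) x = a * qform A x"
proof -
  have "qform (a \<cdot>\<^sub>m A) x = (\<Sum>i<n. \<Sum>j<n. x $ i * (a \<cdot>\<^sub>m A) $$ (i,j) * x $ j)"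
    by (rule qform_sum) (use assms in auto)
  also have "\<dots> = (\<Sum>i<n. \<Sum>j<n. a * (x $ i * A $$ (i,j) * x $ j))"
    using assms by (intro sum.cong refl) (auto simp: algebra_simps)
  finally show ?thesis using assms by (simp add: qform_sum sum_distrib_left)
qed

lemma qform_lincomb:
  assumes "M \<in> carrier_mat n n" "P \<in> carrier_mat n n" "Q \<in> carrier_mat n n" "x \<in> carrier_vec n"
  shows "qform (M + a \<cdot>\<^sub>m P + b \<cdot>\<^sub>m Q) x = qform M x + a * qform P x + b * qform Q x"
proof -
  have "qform (M + a \<cdot>\<^sub>m P + b \<cdot>\<^sub>m Q) x = qform (M + a \<cdot>\<^sub>m P) x + qform (b \<cdot>\<^sub>m Q) x"
    using assms by (intro qform_add[of _ n]) auto
  then show ?thesis using assms by (simp add: qform_add[of _ n] qform_smult[of _ n])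
qed

lemma sum_abs_vec_eq_0_iff:
  fixes x :: "'a::linordered_idom vec"
  assumes "x \<in> carrier_vec n"
  shows "(\<Sum>i<n. \<bar>x $ i\<bar>) = 0 \<longleftrightarrow> x = 0\<^sub>v n"
proof -
  have "(\<Sum>i<n. \<bar>x $ i\<bar>) = 0 \<longleftrightarrow> (\<forall>i<n. x $ i = 0)"
    using sum_nonneg_eq_0_iff[of "{..<n}" "\<lambda>i. \<bar>x $ i\<bar>"] by auto
  then show ?thesis using assms by (auto simp: vec_eq_iff)
qed

lemma qform_le_abs_sum:
  assumes A: "A \<in> carrier_mat n n" and x: "x \<in> carrier_vec n"
  shows "qform A x \<le> (\<Sum>i<n. \<Sum>j<n. \<bar>A $$ (i,j)\<bar>) * (\<Sum>i<n. \<bar>x $ i\<bar>)^2"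
proof -
  define s where "s = (\<Sum>i<n. \<bar>x $ i\<bar>)"
  have xs: "\<bar>x $ i\<bar> \<le> s" if "i < n" for i
    unfolding s_def using that by (intro member_le_sum) auto
  have "s \<ge> 0" unfolding s_def by (intro sum_nonneg) auto
  have "qform A x = (\<Sum>i<n. \<Sum>j<n. x $ i * A $$ (i,j) * x $ j)" by (rule qform_sum[OF A x])
  also have "\<dots> \<le> (\<Sum>i<n. \<Sum>j<n. \<bar>A $$ (i,j)\<bar> * (s * s))"
  proof (intro sum_mono)
    fix i j assume "i \<in> {..<n}" "j \<in> {..<n}"
    have "x $ i * A $$ (i,j) * x $ j \<le> \<bar>x $ i * A $$ (i,j) * x $ j\<bar>" by (rule abs_ge_self)
    also have "\<dots> = \<bar>A $$ (i,j)\<bar> * (\<bar>x $ i\<bar> * \<bar>x $ j\<bar>)" by (simp add: abs_mult)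
    also have "\<dots> \<le> \<bar>A $$ (i,j)\<bar> * (s * s)"
      using xs \<open>s \<ge> 0\<close> \<open>i \<in> {..<n}\<close> \<open>j \<in> {..<n}\<close> by (intro mult_left_mono mult_mono) auto
    finally show "x $ i * A $$ (i,j) * x $ j \<le> \<bar>A $$ (i,j)\<bar> * (s * s)" .
  qed
  finally show ?thesis unfolding s_def by (simp add: sum_distrib_right power2_eq_square)
qed

lemma Re_eigenvalue_neg_if_neg_def:
  assumes A: "A \<in> carrier_mat n n" and nd: "neg_def n A" and ev: "eigenvalue (cmat A) z"
  shows "Re z < 0"
proof -
  obtain v where v: "v \<in> carrier_vec n" "v \<noteq> 0\<^sub>v n" "cmat A *\<^sub>v v = z \<cdot>\<^sub>v v"
    using ev carrier_matD[OF cmat_carrier[OF A]] unfolding eigenvalue_def eigenvector_def by auto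
  have row: "(\<Sum>j<n. complex_of_real (A $$ (i,j)) * v $ j) = z * v $ i" if "i < n" for i
  proof -
    have "(cmat A *\<^sub>v v) $ i = (z \<cdot>\<^sub>v v) $ i" using v(3) by simp
    then show ?thesis using A v(1) that
      by (simp add: cmat_def scalar_prod_def lessThan_atLeast0)
  qed
  define xr where "xr = vec n (\<lambda>i. Re (v $ i))"
  define xi where "xi = vec n (\<lambda>i. Im (v $ i))"
  have xrc: "xr \<in> carrier_vec n" and xic: "xi \<in> carrier_vec n" unfolding xr_def xi_def by auto
  txt \<open>Hermitian form of the eigenvector: \<open>v\<^sup>* A v = z |v|\<^sup>2\<close>, whose real part is
    the sum of the real quadratic forms of \<open>Re v\<close> and \<open>Im v\<close>.\<close>
  have "qform A xr + qform A xi = Re (\<Sum>i<n. cnj (v $ i) * (\<Sum>j<n. complex_of_real (A $$ (i,j)) * v $ j))"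
    unfolding qform_sum[OF A xrc] qform_sum[OF A xic]
    by (simp add: xr_def xi_def Re_sum sum_distrib_left sum.distrib[symmetric] algebra_simps)
  also have "\<dots> = Re (\<Sum>i<n. z * (cnj (v $ i) * v $ i))"
    using row by (intro arg_cong[where f=Re] sum.cong refl) (simp add: mult.left_commute)
  also have "\<dots> = Re z * (\<Sum>i<n. (Re (v $ i))^2 + (Im (v $ i))^2)"
    by (simp add: Re_sum sum_distrib_left power2_eq_square algebra_simps)
  finally have eq: "qform A xr + qform A xi = Re z * (\<Sum>i<n. (Re (v $ i))^2 + (Im (v $ i))^2)" .
  have le0: "qform A y \<le> 0" if "y \<in> carrier_vec n" for y
    using nd that A unfolding neg_def_def by (cases "y = 0\<^sub>v n") (auto simp: qform_def)
  have "xr \<noteq> 0\<^sub>v n \<or> xi \<noteq> 0\<^sub>v n"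
  proof (rule ccontr)
    assume "\<not> ?thesis"
    then have "\<forall>i<n. Re (v $ i) = 0 \<and> Im (v $ i) = 0" unfolding xr_def xi_def
      by (metis index_vec index_zero_vec(1))
    then have "v = 0\<^sub>v n" using v(1) by (intro eq_vecI) (auto simp: complex_eq_iff)
    with v(2) show False by simp
  qed
  then have "qform A xr + qform A xi < 0"
    using nd xrc xic le0[OF xrc] le0[OF xic] unfolding neg_def_def by fastforce
  moreover have "(\<Sum>i<n. (Re (v $ i))^2 + (Im (v $ i))^2) \<ge> 0" by (intro sum_nonneg) auto
  ultimately show ?thesis using eq by (metis mult_nonneg_nonneg not_le)
qed

lemma spectral_abscissa_neg_if_neg_def:
  assumes "A \<in> carrier_mat n n" and "n \<ge> 1" and "neg_def n A"
  shows "spectral_abscissa A < 0"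
  using assms by (intro spectral_abscissa_negI Re_eigenvalue_neg_if_neg_def)

text \<open>Vectors of \<open>\<real>\<^sup>n\<close> are encoded as functions \<open>nat \<Rightarrow> real\<close> vanishing from \<open>n\<close> on; the
  redundant box constraint makes compactness in the product topology immediate.\<close>
definition l1_sphere :: "nat \<Rightarrow> (nat \<Rightarrow> real) set" where
  "l1_sphere n = {y \<in> PiE UNIV (\<lambda>i::nat. if i < n then {-1..1} else {0::real}). (\<Sum>i<n. \<bar>y i\<bar>) = 1}"

lemma compact_l1_sphere: "compact (l1_sphere n)"
proof -
  have "compactin (product_topology (\<lambda>i. euclidean) UNIV)
      (PiE UNIV (\<lambda>i::nat. if i < n then {-1..1} else {0::real}))"
    unfolding compactin_PiE by (auto simp: compactin_euclidean_iff)
  then have "compact (PiE UNIV (\<lambda>i::nat. if i < n then {-1..1} else {0::real}))"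
    unfolding euclidean_product_topology compactin_euclidean_iff .
  moreover have "closed {y :: nat \<Rightarrow> real. (\<Sum>i<n. \<bar>y i\<bar>) = 1}"
    by (intro closed_Collect_eq continuous_intros) simp_all
  ultimately show ?thesis
    by (simp add: l1_sphere_def Collect_conj_eq compact_Int_closed)
qed

lemma qform_vec:
  assumes "Q \<in> carrier_mat n n"
  shows "qform Q (vec n y) = (\<Sum>i<n. \<Sum>j<n. y i * Q $$ (i,j) * y j)"
  unfolding qform_sum[OF assms vec_carrier] by (intro sum.cong refl) auto

lemma neg_def_max_on_l1_sphere:
  assumes Q: "Q \<in> carrier_mat n n" and n: "n \<ge> 1" and nd: "neg_def n Q"
  obtains m where "m < 0" and "\<And>y. y \<in> l1_sphere n \<Longrightarrow> qform Q (vec n y) \<le> m"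
proof -
  have coord: "continuous_on UNIV (\<lambda>y::nat \<Rightarrow> real. y i)" for i by simp
  have "continuous_on UNIV (\<lambda>y. qform Q (vec n y))"
    unfolding qform_vec[OF Q] by (intro continuous_intros coord)
  then have "continuous_on (l1_sphere n) (\<lambda>y. qform Q (vec n y))"
    by (rule continuous_on_subset) simp
  moreover have "(\<lambda>i. if i = 0 then 1 else 0) \<in> l1_sphere n"
    using n by (auto simp: l1_sphere_def PiE_UNIV_domain)
  ultimately obtain ys where
    ys: "ys \<in> l1_sphere n" "\<forall>y\<in>l1_sphere n. qform Q (vec n y) \<le> qform Q (vec n ys)"
    using continuous_attains_sup[OF compact_l1_sphere] by blast
  have "vec n ys \<noteq> 0\<^sub>v n"
  proof
    assume "vec n ys = 0\<^sub>v n"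
    then have "\<forall>i<n. ys i = 0" by (metis index_vec index_zero_vec(1))
    with ys(1) show False by (simp add: l1_sphere_def)
  qed
  then have "qform Q (vec n ys) < 0" using nd unfolding neg_def_def by auto
  with ys(2) that show ?thesis by blast
qed

lemma neg_def_uniform:
  assumes Q: "Q \<in> carrier_mat n n" and n: "n \<ge> 1" and nd: "neg_def n Q"
  shows "\<exists>c>0. \<forall>x\<in>carrier_vec n. qform Q x \<le> - c * (\<Sum>i<n. \<bar>x $ i\<bar>)^2"
proof -
  obtain m where m: "m < 0" "\<And>y. y \<in> l1_sphere n \<Longrightarrow> qform Q (vec n y) \<le> m"
    using neg_def_max_on_l1_sphere[OF Q n nd] by blast
  show ?thesis
  proof (intro exI[of _ "- m"] conjI ballI)
    show "0 < - m" using m(1) by simp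
    fix x :: "real vec" assume x: "x \<in> carrier_vec n"
    define s where "s = (\<Sum>i<n. \<bar>x $ i\<bar>)"
    show "qform Q x \<le> - (- m) * (\<Sum>i<n. \<bar>x $ i\<bar>)^2"
    proof (cases "s = 0")
      case True
      then show ?thesis using x Q sum_abs_vec_eq_0_iff[OF x] by (simp add: s_def qform_def)
    next
      case False
      then have s: "s > 0" unfolding s_def by (simp add: order_le_neq_trans[OF sum_nonneg])
      define y where "y i = (if i < n then x $ i / s else 0)" for i
      have "\<bar>x $ i\<bar> \<le> s" if "i < n" for i
        unfolding s_def using that by (intro member_le_sum) auto
      then have "- s \<le> x $ i \<and> x $ i \<le> s" if "i < n" for i
        using that by fastforce
      then have "y \<in> PiE UNIV (\<lambda>i::nat. if i < n then {-1..1} else {0::real})"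
        using s by (auto simp: y_def PiE_UNIV_domain divide_le_eq le_divide_eq)
      moreover have "(\<Sum>i<n. \<bar>y i\<bar>) = 1"
        using s by (simp add: y_def s_def sum_divide_distrib[symmetric])
      ultimately have "qform Q (vec n y) \<le> m" by (intro m(2)) (simp add: l1_sphere_def)
      moreover have "qform Q (vec n y) = qform Q x / s^2"
        unfolding qform_vec[OF Q] qform_sum[OF Q x] sum_divide_distrib
        by (intro sum.cong refl) (simp add: y_def power2_eq_square)
      ultimately show ?thesis using s by (simp add: s_def divide_le_eq)
    qed
  qed
qed

lemma qform_quartic_scaling_le:
  assumes M: "M \<in> carrier_mat n n" and J2: "J2 \<in> carrier_mat n n" and J4: "J4 \<in> carrier_mat n n"
    and x: "x \<in> carrier_vec n" and t: "t \<ge> 1" and J4x: "qform J4 x \<le> 0"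
  shows "qform (M + ((t * k)^2) \<cdot>\<^sub>m J2 + ((t * k)^4) \<cdot>\<^sub>m J4) x
    \<le> qform M x + t^2 * qform ((k^2) \<cdot>\<^sub>m J2 + (k^4) \<cdot>\<^sub>m J4) x"
proof -
  have "t^2 * k^4 * qform J4 x * (t^2 - 1) \<le> 0"
    using t J4x by (intro mult_nonpos_nonneg mult_nonneg_nonpos) (auto simp: one_le_power)
  then show ?thesis
    using J2 J4 x
    by (simp add: qform_lincomb[OF M J2 J4 x] qform_add[of _ n] qform_smult[of _ n]
        power_mult_distrib algebra_simps)
qed

lemma neg_def_at_large_kappa:
  assumes M: "M \<in> carrier_mat n n" and J2: "J2 \<in> carrier_mat n n" and J4: "J4 \<in> carrier_mat n n"
    and n: "n \<ge> 1" and nsd: "neg_semidef n J4"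
    and nd: "neg_def n ((kb^2) \<cdot>\<^sub>m J2 + (kb^4) \<cdot>\<^sub>m J4)"
  shows "\<exists>\<kappa>>K0. neg_def n (M + (\<kappa>^2) \<cdot>\<^sub>m J2 + (\<kappa>^4) \<cdot>\<^sub>m J4)"
proof -
  let ?Q = "(kb^2) \<cdot>\<^sub>m J2 + (kb^4) \<cdot>\<^sub>m J4"
  have kb: "kb \<noteq> 0"
  proof
    assume "kb = 0"
    have "unit_vec n 0 \<in> carrier_vec n" "unit_vec n 0 \<noteq> 0\<^sub>v n"
      using n by (auto simp: vec_eq_iff)
    with nd \<open>kb = 0\<close> J2 J4 show False
      unfolding neg_def_def by (force simp: qform_add[of _ n] qform_smult[of _ n])
  qed
  obtain c where c: "c > 0" "\<forall>x\<in>carrier_vec n. qform ?Q x \<le> - c * (\<Sum>i<n. \<bar>x $ i\<bar>)^2"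
    using neg_def_uniform[OF _ n nd] J2 J4 by auto
  define K where "K = (\<Sum>i<n. \<Sum>j<n. \<bar>M $$ (i,j)\<bar>)"
  txt \<open>Take \<open>\<kappa> = t \<bar>kb\<bar>\<close> with \<open>t \<ge> 1\<close> so large that \<open>t\<^sup>2 c\<close> beats the entry bound \<open>K\<close> of \<open>M\<close>.\<close>
  define t where "t = max 1 (max ((K + 1) / c) ((\<bar>K0\<bar> + 1) / \<bar>kb\<bar>))"
  have t1: "t \<ge> 1" unfolding t_def by simp
  have "(K + 1) / c \<le> t" unfolding t_def by simp
  then have "t * c \<ge> K + 1" using c(1) by (simp add: pos_divide_le_eq)
  moreover have "K \<ge> 0" unfolding K_def by (intro sum_nonneg) auto
  ultimately have "t * c \<le> t * (t * c)" using mult_right_mono[OF t1, of "t * c"] by simp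
  with \<open>t * c \<ge> K + 1\<close> have tc: "t^2 * c > K" by (simp add: power2_eq_square mult.assoc)
  have "(\<bar>K0\<bar> + 1) / \<bar>kb\<bar> \<le> t" unfolding t_def by simp
  then have "t * \<bar>kb\<bar> \<ge> \<bar>K0\<bar> + 1" using kb by (simp add: pos_divide_le_eq)
  then have "t * \<bar>kb\<bar> > K0" by linarith
  moreover have "qform (M + ((t * \<bar>kb\<bar>)^2) \<cdot>\<^sub>m J2 + ((t * \<bar>kb\<bar>)^4) \<cdot>\<^sub>m J4) x < 0"
    if x: "x \<in> carrier_vec n" "x \<noteq> 0\<^sub>v n" for x
  proof -
    define s where "s = (\<Sum>i<n. \<bar>x $ i\<bar>)"
    have s: "s > 0"
      using sum_abs_vec_eq_0_iff[OF x(1)] x(2) unfolding s_def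
      by (simp add: order_le_neq_trans[OF sum_nonneg])
    have "qform J4 x \<le> 0" using nsd x unfolding neg_semidef_def by blast
    from qform_quartic_scaling_le[OF M J2 J4 x(1) t1 this, of "\<bar>kb\<bar>"]
    have "qform (M + ((t * \<bar>kb\<bar>)^2) \<cdot>\<^sub>m J2 + ((t * \<bar>kb\<bar>)^4) \<cdot>\<^sub>m J4) x
        \<le> qform M x + t^2 * qform ?Q x"
      by (simp add: power_even_abs_numeral)
    also have "\<dots> \<le> K * s^2 + t^2 * (- c * s^2)"
      using qform_le_abs_sum[OF M x(1)] c(2) x(1) unfolding K_def s_def
      by (intro add_mono mult_left_mono) auto
    also have "\<dots> = (K - t^2 * c) * s^2" by (simp add: algebra_simps)
    also have "\<dots> < 0" using tc s by (intro mult_neg_pos) auto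
    finally show ?thesis .
  qed
  ultimately show ?thesis unfolding neg_def_def by blast
qed

lemma isCont_coeff_prod:
  fixes f :: "'b \<Rightarrow> real \<Rightarrow> real poly"
  assumes "finite I" and "\<And>i k. i \<in> I \<Longrightarrow> isCont (\<lambda>t. coeff (f i t) k) t0"
  shows "isCont (\<lambda>t. coeff (\<Prod>i\<in>I. f i t) k) t0"
  using assms
proof (induct I arbitrary: k rule: finite_induct)
  case empty
  then show ?case by simp
next
  case (insert x F)
  have "isCont (\<lambda>t. \<Sum>j\<le>k. coeff (f x t) j * coeff (\<Prod>i\<in>F. f i t) (k - j)) t0"
    using insert by (intro continuous_intros) auto
  then show ?case using insert by (simp add: coeff_mult)
qed

lemma isCont_coeff_char_poly:
  fixes A :: "real \<Rightarrow> real mat"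
  assumes A: "\<And>t. A t \<in> carrier_mat n n"
    and cont: "\<And>i j. i < n \<Longrightarrow> j < n \<Longrightarrow> isCont (\<lambda>t. A t $$ (i,j)) t0"
  shows "isCont (\<lambda>t. coeff (char_poly (A t)) k) t0"
proof -
  have char_poly_eq: "char_poly (A t) = (\<Sum>p\<in>{p. p permutes {0..<n}}.
      signof p * (\<Prod>i = 0..<n. char_poly_matrix (A t) $$ (i, p i)))" for t
    unfolding char_poly_def by (rule det_def') (use A in auto)
  have entry: "isCont (\<lambda>t. coeff (char_poly_matrix (A t) $$ (i, j)) k) t0"
    if "i < n" "j < n" for i j k
  proof -
    have "char_poly_matrix (A t) $$ (i, j) = (if i = j then [:0,1:] else 0) + [: - (A t $$ (i,j)) :]" for t
      using A[of t] that unfolding char_poly_matrix_def by auto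
    then show ?thesis
      using cont[OF that] by (cases k) (auto intro!: continuous_intros)
  qed
  have "isCont (\<lambda>t. coeff (signof p * (\<Prod>i = 0..<n. char_poly_matrix (A t) $$ (i, p i))) k) t0"
    if p: "p permutes {0..<n}" for p
  proof -
    have "i < n \<Longrightarrow> p i < n" for i using permutes_in_image[OF p, of i] by simp
    then have "isCont (\<lambda>t. coeff (\<Prod>i = 0..<n. char_poly_matrix (A t) $$ (i, p i)) k) t0"
      by (intro isCont_coeff_prod) (auto intro: entry)
    then show ?thesis
      by (cases p rule: sign_cases) (auto intro: continuous_intros)
  qed
  then show ?thesis unfolding char_poly_eq coeff_sum
    by (intro continuous_intros) (auto simp: finite_permutations)
qed

lemma roots_closed_rhp_of_simple_zero:
  fixes P :: "complex poly"
  assumes P: "P \<noteq> 0" and P0: "poly P 0 = 0"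
    and lhp: "(\<Sum>z\<in>{z. poly P z = 0 \<and> Re z < 0}. order z P) = degree P - 1"
  shows "order 0 P = 1" and "\<And>z. poly P z = 0 \<Longrightarrow> Re z \<ge> 0 \<Longrightarrow> z = 0"
proof -
  let ?L = "{z. poly P z = 0 \<and> Re z < 0}"
  have fin: "finite {z. poly P z = 0}" by (rule poly_roots_finite[OF P])
  have ord_pos: "order z P \<ge> 1" if "poly P z = 0" for z
    using order_root[of P z] that P by auto
  have "1 \<le> degree P" using ord_pos[OF P0] order_degree[OF P, of 0] by linarith
  txt \<open>The roots in the open left half-plane already use up \<open>deg P - 1\<close> of the
    multiplicities, leaving room for a single simple root in the closed right half-plane.\<close>
  have rhp: "(\<Sum>z\<in>Z. order z P) \<le> 1" if Z: "Z \<subseteq> {z. poly P z = 0 \<and> Re z \<ge> 0}" for Z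
  proof -
    have "finite Z" using Z fin by (auto intro: finite_subset)
    moreover have "?L \<union> Z \<subseteq> {z. poly P z = 0}" using Z by auto
    ultimately have "(\<Sum>z\<in>?L \<union> Z. order z P) \<le> degree P"
      using order_sum_degree[OF P] fin by (meson sum_mono2 zero_le order_trans)
    moreover have "?L \<inter> Z = {}" using Z by auto
    ultimately have "(\<Sum>z\<in>?L. order z P) + (\<Sum>z\<in>Z. order z P) \<le> degree P"
      using fin \<open>finite Z\<close> by (simp add: sum.union_disjoint finite_subset)
    with lhp \<open>1 \<le> degree P\<close> show ?thesis by linarith
  qed
  show "order 0 P = 1" using rhp[of "{0}"] ord_pos[OF P0] P0 by auto
  show "z = 0" if "poly P z = 0" and "Re z \<ge> 0" for z
  proof (rule ccontr)
    assume "z \<noteq> 0"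
    then have "(\<Sum>x\<in>{0, z}. order x P) \<le> 1" using rhp[of "{0, z}"] P0 that by auto
    with \<open>z \<noteq> 0\<close> ord_pos[OF P0] ord_pos[OF that(1)] show False by simp
  qed
qed

lemma coeff_1_neq_0_if_order_0_eq_1:
  fixes p :: "'a::field_char_0 poly"
  assumes "p \<noteq> 0" and "order 0 p = 1"
  shows "coeff p 1 \<noteq> 0"
proof -
  have root: "poly p 0 = 0" using assms order_root by force
  have "pderiv p \<noteq> 0"
  proof
    assume "pderiv p = 0"
    then have "degree p = 0" by (simp add: pderiv_eq_0_iff)
    with root assms(1) show False by (metis degree_0_id poly_const_conv pCons_0_0)
  qed
  moreover have "order 0 (pderiv p) = 0" using order_pderiv[OF assms(1) root] assms(2) by simp
  ultimately have "poly (pderiv p) 0 \<noteq> 0" using order_root by blast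
  then show ?thesis by (simp add: poly_0_coeff_0 coeff_pderiv)
qed

lemma coeff_1_pos_if_no_pos_roots:
  fixes p :: "real poly"
  assumes lc: "lead_coeff p > 0" and p0: "poly p 0 = 0" and "coeff p 1 \<noteq> 0"
    and no_root: "\<And>x. x > 0 \<Longrightarrow> poly p x \<noteq> 0"
  shows "coeff p 1 > 0"
proof (rule ccontr)
  assume "\<not> coeff p 1 > 0"
  then have "poly (pderiv p) 0 < 0"
    using \<open>coeff p 1 \<noteq> 0\<close> by (simp add: poly_0_coeff_0 coeff_pderiv)
  then obtain d where "d > 0" "\<forall>h>0. h < d \<longrightarrow> poly p (0 + h) < poly p 0"
    using DERIV_neg_dec_right[OF poly_DERIV] by blast
  then have "poly p (d / 2) < 0" using p0 by simp
  then obtain x where "x > d / 2" "poly p x = 0" using poly_root_gt_if_neg[OF lc] by blast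
  with no_root \<open>d > 0\<close> show False by simp
qed

lemma char_poly_simple_zero_stable:
  assumes M: "M \<in> carrier_mat n n" and "det M = 0" and "n_neg_eigs M = n - 1"
  shows "\<And>z. poly (map_poly complex_of_real (char_poly M)) z = 0 \<Longrightarrow> Re z \<ge> 0 \<Longrightarrow> z = 0"
    and "coeff (char_poly M) 1 > 0"
proof -
  let ?p = "char_poly M"
  let ?P = "map_poly complex_of_real ?p"
  have P: "?P \<noteq> 0" using lead_coeff_char_poly[OF M] by auto
  have "degree ?P = n" using degree_monic_char_poly[OF M] by simp
  moreover have "poly ?p 0 = 0"
    using poly_char_poly_0[OF M] det_0_negate[OF M] \<open>det M = 0\<close> by simp
  then have P0: "poly ?P 0 = 0" by (simp add: of_real_hom.poly_map_poly[symmetric])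
  moreover have "{z. poly ?P z = 0 \<and> Re z < 0} = {z. eigenvalue (cmat M) z \<and> Re z < 0}"
    using eigenvalue_cmat_iff[OF M] by blast
  ultimately have "(\<Sum>z\<in>{z. poly ?P z = 0 \<and> Re z < 0}. order z ?P) = degree ?P - 1"
    using \<open>n_neg_eigs M = n - 1\<close> char_poly_cmat[OF M] by (simp add: n_neg_eigs_def)
  note simple = roots_closed_rhp_of_simple_zero[OF P P0 this]
  show "z = 0" if "poly ?P z = 0" "Re z \<ge> 0" for z by (rule simple(2)[OF that])
  have "coeff ?P 1 \<noteq> 0" by (rule coeff_1_neq_0_if_order_0_eq_1[OF P simple(1)])
  moreover have "poly ?p x \<noteq> 0" if "x > 0" for x
    using simple(2)[of "complex_of_real x"] that by (auto simp: of_real_hom.poly_map_poly)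
  ultimately show "coeff ?p 1 > 0"
    using coeff_1_pos_if_no_pos_roots[of ?p] lead_coeff_char_poly[OF M] \<open>poly ?p 0 = 0\<close>
    by (simp add: coeff_map_poly)
qed

lemma norm_root_le_Cauchy_bound:
  fixes p :: "'a::real_normed_field poly"
  assumes monic: "lead_coeff p = 1" and root: "poly p z = 0"
  shows "norm z \<le> 1 + (\<Sum>i<degree p. norm (coeff p i))"
proof (cases "norm z \<le> 1")
  case True
  moreover have "(\<Sum>i<degree p. norm (coeff p i)) \<ge> 0" by (intro sum_nonneg) auto
  ultimately show ?thesis by linarith
next
  case False
  define d where "d = degree p"
  define S where "S = (\<Sum>i<d. norm (coeff p i))"
  have "(\<Sum>i<d. coeff p i * z^i) + z^d = 0"
    using root monic by (simp add: poly_altdef d_def lessThan_Suc_atMost[symmetric])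
  then have "norm z ^ d = norm (\<Sum>i<d. coeff p i * z^i)"
    by (metis add_eq_0_iff norm_minus_cancel norm_power)
  also have "\<dots> \<le> (\<Sum>i<d. norm (coeff p i) * norm z ^ i)"
    by (rule order_trans[OF norm_sum]) (simp add: norm_mult norm_power)
  also have "\<dots> \<le> (\<Sum>i<d. norm (coeff p i) * norm z ^ (d - 1))"
    using False by (intro sum_mono mult_left_mono power_increasing) auto
  also have "\<dots> = S * norm z ^ (d - 1)" by (simp add: S_def sum_distrib_right)
  finally have le: "norm z ^ d \<le> S * norm z ^ (d - 1)" .
  show ?thesis
  proof (cases d)
    case 0
    with le show ?thesis by (simp add: S_def)
  next
    case (Suc e)
    with le have "norm z * norm z ^ e \<le> S * norm z ^ e" by (simp add: mult.commute)
    moreover have "norm z ^ e > 0" by (rule zero_less_power) (use False in linarith)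
    ultimately have "norm z \<le> S" by (simp add: mult_le_cancel_right)
    then show ?thesis by (simp add: S_def d_def)
  qed
qed

text \<open>\<open>(p(z) - p(w)) / (z - w)\<close> as a polynomial in \<open>z, w\<close>; summing up to a fixed \<open>N\<close> rather
  than \<open>degree p\<close> keeps it continuous along a family of polynomials.\<close>
definition divided_difference :: "nat \<Rightarrow> real poly \<Rightarrow> complex \<Rightarrow> complex \<Rightarrow> complex" where
  "divided_difference N p z w = (\<Sum>i\<le>N. complex_of_real (coeff p i) * (\<Sum>k<i. w^(i - Suc k) * z^k))"

lemma poly_of_real_eq_sum:
  assumes "degree p \<le> N"
  shows "poly (map_poly complex_of_real p) z = (\<Sum>i\<le>N. complex_of_real (coeff p i) * z^i)"
proof -
  have "poly (map_poly complex_of_real p) z = (\<Sum>i\<le>degree p. complex_of_real (coeff p i) * z^i)"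
    by (simp add: poly_altdef coeff_map_poly)
  also have "\<dots> = (\<Sum>i\<le>N. complex_of_real (coeff p i) * z^i)"
    by (rule sum.mono_neutral_left) (use assms in \<open>auto simp: coeff_eq_0\<close>)
  finally show ?thesis .
qed

lemma poly_diff_eq_divided_difference:
  assumes "degree p \<le> N"
  shows "poly (map_poly complex_of_real p) z - poly (map_poly complex_of_real p) w
    = (z - w) * divided_difference N p z w"
proof -
  have "poly (map_poly complex_of_real p) z - poly (map_poly complex_of_real p) w
      = (\<Sum>i\<le>N. complex_of_real (coeff p i) * (z^i - w^i))"
    unfolding poly_of_real_eq_sum[OF assms] by (simp add: sum_subtractf[symmetric] right_diff_distrib)
  also have "\<dots> = (\<Sum>i\<le>N. (z - w) * (complex_of_real (coeff p i) * (\<Sum>k<i. w^(i - Suc k) * z^k)))"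
    by (rule sum.cong) (auto simp: power_diff_sumr2 mult_ac)
  finally show ?thesis by (simp add: divided_difference_def sum_distrib_left)
qed

lemma divided_difference_0_0:
  assumes "N \<ge> 1"
  shows "divided_difference N p 0 0 = complex_of_real (coeff p 1)"
proof -
  have "(\<Sum>k<i. (0::complex)^(i - Suc k) * 0^k) = (if i = 1 then 1 else 0)" for i
  proof (cases i)
    case (Suc m)
    have "(\<Sum>k<Suc m. (0::complex)^(m - k) * 0^k) = (\<Sum>k<Suc m. if k = 0 \<and> m = 0 then 1 else 0)"
      by (rule sum.cong) auto
    then show ?thesis using Suc by simp
  qed simp
  then have "divided_difference N p 0 0 = (\<Sum>i\<le>N. if i = 1 then complex_of_real (coeff p 1) else 0)"
    unfolding divided_difference_def by (intro sum.cong) auto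
  also have "\<dots> = complex_of_real (coeff p 1)" using assms by simp
  finally show ?thesis .
qed

text \<open>The second point is chosen so that \<open>p(w)\<close> is known: \<open>p(0) > 0\<close> for a real root \<open>z\<close>,
  and \<open>p(cnj z) = 0\<close> for a non-real one.\<close>
lemma Re_divided_difference_nonpos_at_root:
  assumes deg: "degree p \<le> N" and root: "poly (map_poly complex_of_real p) z = 0"
    and rhp: "Re z \<ge> 0" and pos: "poly p 0 > 0"
  shows "Re (divided_difference N p z (if Im z = 0 then 0 else cnj z)) \<le> 0"
proof (cases "Im z = 0")
  case True
  let ?d = "divided_difference N p z 0"
  have "poly (map_poly complex_of_real p) 0 = complex_of_real (poly p 0)"
    by (simp add: poly_0_coeff_0 coeff_map_poly)
  then have "- complex_of_real (poly p 0) = z * ?d"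
    using poly_diff_eq_divided_difference[OF deg, of z 0] root by simp
  from arg_cong[OF this, of Re] True have eq: "- poly p 0 = Re z * Re ?d" by simp
  show ?thesis
  proof (rule ccontr)
    assume "\<not> ?thesis"
    with True rhp have "Re z * Re ?d \<ge> 0" by simp
    with eq pos show False by linarith
  qed
next
  case False
  have "poly (map_poly complex_of_real p) (cnj z) = 0"
    using root by (subst real_poly_cnj_root_iff) (auto simp: coeff_map_poly)
  then have "(z - cnj z) * divided_difference N p z (cnj z) = 0"
    using poly_diff_eq_divided_difference[OF deg, of z "cnj z"] root by simp
  moreover have "z - cnj z \<noteq> 0" using False by (simp add: complex_eq_iff)
  ultimately show ?thesis using False by simp
qed

lemma tendsto_poly_of_real_family:
  fixes p :: "real \<Rightarrow> real poly"
  assumes "\<And>t. degree (p t) \<le> N" and "\<And>i. isCont (\<lambda>t. coeff (p t) i) 0"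
    and "ks \<longlonglongrightarrow> 0" and "zs \<longlonglongrightarrow> \<zeta>"
  shows "(\<lambda>j. poly (map_poly complex_of_real (p (ks j))) (zs j))
    \<longlonglongrightarrow> poly (map_poly complex_of_real (p 0)) \<zeta>"
  unfolding poly_of_real_eq_sum[OF assms(1)]
  by (intro tendsto_intros isCont_tendsto_compose[OF assms(2)] assms(3,4))

lemma tendsto_divided_difference_family:
  fixes p :: "real \<Rightarrow> real poly"
  assumes "\<And>i. isCont (\<lambda>t. coeff (p t) i) 0"
    and "ks \<longlonglongrightarrow> 0" and "zs \<longlonglongrightarrow> \<zeta>" and "ws \<longlonglongrightarrow> \<omega>"
  shows "(\<lambda>j. divided_difference N (p (ks j)) (zs j) (ws j)) \<longlonglongrightarrow> divided_difference N (p 0) \<zeta> \<omega>"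
  unfolding divided_difference_def
  by (intro tendsto_intros isCont_tendsto_compose[OF assms(1)] assms(2-4))

lemma rhp_roots_subseq_tendsto_0:
  fixes p :: "real \<Rightarrow> real poly"
  assumes deg: "\<And>t. degree (p t) = N" and monic: "\<And>t. lead_coeff (p t) = 1"
    and cont: "\<And>i. isCont (\<lambda>t. coeff (p t) i) 0"
    and roots0: "\<And>z. poly (map_poly complex_of_real (p 0)) z = 0 \<Longrightarrow> Re z \<ge> 0 \<Longrightarrow> z = 0"
    and ks: "ks \<longlonglongrightarrow> 0" and root: "\<And>j. poly (map_poly complex_of_real (p (ks j))) (zs j) = 0"
    and rhp: "\<And>j. Re (zs j) \<ge> 0"
  obtains r where "strict_mono r" and "(zs \<circ> r) \<longlonglongrightarrow> 0"
proof -
  define R where "R t = 1 + (\<Sum>i<N. \<bar>coeff (p t) i\<bar>)" for t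
  have "(\<lambda>j. R (ks j)) \<longlonglongrightarrow> R 0"
    unfolding R_def by (intro tendsto_intros isCont_tendsto_compose[OF cont] ks)
  then have "Bseq (\<lambda>j. R (ks j))" by (rule convergent_imp_Bseq[OF convergentI])
  then obtain K where K: "\<And>j. \<bar>R (ks j)\<bar> \<le> K" using BseqE by (metis real_norm_def)
  have "cmod (zs j) \<le> R (ks j)" for j
    using norm_root_le_Cauchy_bound[OF _ root[of j]] deg monic
    by (simp add: R_def coeff_map_poly)
  then have "cmod (zs j) \<le> K" for j using K[of j] by (meson abs_ge_self order_trans)
  then have "bounded (range (\<lambda>j. (Re (zs j), Im (zs j))))"
    unfolding bounded_iff by (intro exI[of _ K]) (auto simp: norm_prod_def cmod_def)
  from bounded_imp_convergent_subsequence[OF this] obtain l r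
    where r: "strict_mono r" and lim: "((\<lambda>j. (Re (zs j), Im (zs j))) \<circ> r) \<longlonglongrightarrow> l"
    by blast
  define \<zeta> where "\<zeta> = Complex (fst l) (snd l)"
  have "(\<lambda>j. Complex (fst (((\<lambda>j. (Re (zs j), Im (zs j))) \<circ> r) j))
      (snd (((\<lambda>j. (Re (zs j), Im (zs j))) \<circ> r) j))) \<longlonglongrightarrow> \<zeta>"
    unfolding \<zeta>_def by (intro tendsto_Complex tendsto_fst tendsto_snd lim)
  then have zs: "(zs \<circ> r) \<longlonglongrightarrow> \<zeta>" by (simp add: o_def)
  have "(\<lambda>j. poly (map_poly complex_of_real (p ((ks \<circ> r) j))) ((zs \<circ> r) j))
      \<longlonglongrightarrow> poly (map_poly complex_of_real (p 0)) \<zeta>"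
    using deg
    by (intro tendsto_poly_of_real_family[of p N, OF _ cont LIMSEQ_subseq_LIMSEQ[OF ks r] zs]) simp
  then have "poly (map_poly complex_of_real (p 0)) \<zeta> = 0"
    using root by (simp add: LIMSEQ_const_iff)
  moreover have "Re \<zeta> \<ge> 0"
    using rhp by (intro LIMSEQ_le_const[OF tendsto_Re[OF zs]]) simp
  ultimately have "\<zeta> = 0" by (rule roots0)
  with r zs that show ?thesis by blast
qed

lemma not_eventually_at_right_0E:
  fixes P :: "real \<Rightarrow> bool"
  assumes "\<not> (\<forall>\<^sub>F t in at_right 0. P t)"
  obtains ks where "ks \<longlonglongrightarrow> 0" and "\<And>j. \<not> P (ks j)"
proof -
  have "\<exists>t. 0 < t \<and> t < inverse (Suc j) \<and> \<not> P t" for j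
  proof -
    have "inverse (real (Suc j)) > 0" by simp
    then show ?thesis using assms unfolding eventually_at_right_field by blast
  qed
  then obtain ks where ks: "\<And>j. 0 < ks j \<and> ks j < inverse (Suc j) \<and> \<not> P (ks j)" by metis
  have "ks \<longlonglongrightarrow> 0"
  proof (rule tendsto_sandwich[OF _ _ tendsto_const LIMSEQ_inverse_real_of_nat])
    show "\<forall>\<^sub>F j in sequentially. 0 \<le> ks j" using ks by (simp add: less_imp_le)
    show "\<forall>\<^sub>F j in sequentially. ks j \<le> inverse (real (Suc j))" using ks by (simp add: less_imp_le)
  qed
  with ks that show ?thesis by blast
qed

lemma eventually_roots_in_open_lhp:
  fixes p :: "real \<Rightarrow> real poly"
  assumes deg: "\<And>t. degree (p t) = N" and monic: "\<And>t. lead_coeff (p t) = 1"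
    and cont: "\<And>i. isCont (\<lambda>t. coeff (p t) i) 0"
    and roots0: "\<And>z. poly (map_poly complex_of_real (p 0)) z = 0 \<Longrightarrow> Re z \<ge> 0 \<Longrightarrow> z = 0"
    and slope0: "coeff (p 0) 1 > 0"
    and const_pos: "\<forall>\<^sub>F t in at_right 0. poly (p t) 0 > 0"
  shows "\<forall>\<^sub>F t in at_right 0. \<forall>z. poly (map_poly complex_of_real (p t)) z = 0 \<longrightarrow> Re z < 0"
proof -
  have "\<forall>\<^sub>F t in at_right 0. poly (p t) 0 > 0 \<longrightarrow>
      (\<forall>z. poly (map_poly complex_of_real (p t)) z = 0 \<longrightarrow> Re z < 0)"
  proof (rule ccontr)
    assume "\<not> ?thesis"
    then obtain ks where ks: "ks \<longlonglongrightarrow> 0" and "\<And>j. \<not> (poly (p (ks j)) 0 > 0 \<longrightarrow>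
        (\<forall>z. poly (map_poly complex_of_real (p (ks j))) z = 0 \<longrightarrow> Re z < 0))"
      by (rule not_eventually_at_right_0E) blast
    then obtain zs where pos: "\<And>j. poly (p (ks j)) 0 > 0"
      and root: "\<And>j. poly (map_poly complex_of_real (p (ks j))) (zs j) = 0"
      and rhp: "\<And>j. Re (zs j) \<ge> 0"
      by (metis not_less)
    obtain r where r: "strict_mono r" "(zs \<circ> r) \<longlonglongrightarrow> 0"
      using rhp_roots_subseq_tendsto_0[OF deg monic cont roots0 ks root rhp] by blast
    define w where "w j = (if Im (zs j) = 0 then 0 else cnj (zs j))" for j
    have "(w \<circ> r) \<longlonglongrightarrow> 0"
      by (rule tendsto_0_le[OF r(2), where K=1]) (simp add: w_def)
    from tendsto_divided_difference_family[OF cont LIMSEQ_subseq_LIMSEQ[OF ks r(1)] r(2) this]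
    have "(\<lambda>j. divided_difference N (p ((ks \<circ> r) j)) ((zs \<circ> r) j) ((w \<circ> r) j))
        \<longlonglongrightarrow> divided_difference N (p 0) 0 0" .
    moreover have "1 \<le> N" using slope0 le_degree[of "p 0" 1] deg by fastforce
    ultimately have "(\<lambda>j. divided_difference N (p ((ks \<circ> r) j)) ((zs \<circ> r) j) ((w \<circ> r) j))
        \<longlonglongrightarrow> complex_of_real (coeff (p 0) 1)"
      by (simp only: divided_difference_0_0)
    then have "(\<lambda>j. Re (divided_difference N (p (ks (r j))) (zs (r j)) (w (r j))))
        \<longlonglongrightarrow> coeff (p 0) 1"
      using tendsto_Re by fastforce
    from order_tendstoD(1)[OF this slope0] obtain j where
      "Re (divided_difference N (p (ks (r j))) (zs (r j)) (w (r j))) > 0"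
      by (meson eventually_sequentially order_refl)
    moreover have "Re (divided_difference N (p (ks (r j))) (zs (r j)) (w (r j))) \<le> 0"
      unfolding w_def using deg pos root rhp by (intro Re_divided_difference_nonpos_at_root) auto
    ultimately show False by simp
  qed
  with const_pos show ?thesis by eventually_elim blast
qed

lemma eventually_spectral_abscissa_neg_at_right_0:
  fixes A :: "real \<Rightarrow> real mat"
  assumes n: "n \<ge> 1" and A: "\<And>t. A t \<in> carrier_mat n n"
    and cont: "\<And>i j. i < n \<Longrightarrow> j < n \<Longrightarrow> isCont (\<lambda>t. A t $$ (i,j)) 0"
    and sing: "det (A 0) = 0" and lhp: "n_neg_eigs (A 0) = n - 1"
    and det_pos: "\<forall>\<^sub>F t in at_right 0. det (- A t) > 0"
  shows "\<forall>\<^sub>F t in at_right 0. spectral_abscissa (A t) < 0"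
proof -
  have "\<forall>\<^sub>F t in at_right 0. \<forall>z. poly (map_poly complex_of_real (char_poly (A t))) z = 0 \<longrightarrow> Re z < 0"
  proof (rule eventually_roots_in_open_lhp)
    show "degree (char_poly (A t)) = n" for t using degree_monic_char_poly[OF A] by simp
    show "lead_coeff (char_poly (A t)) = 1" for t by (rule lead_coeff_char_poly[OF A])
    show "isCont (\<lambda>t. coeff (char_poly (A t)) i) 0" for i by (rule isCont_coeff_char_poly[OF A cont])
    show "z = 0" if "poly (map_poly complex_of_real (char_poly (A 0))) z = 0" "Re z \<ge> 0" for z
      using char_poly_simple_zero_stable(1)[OF A sing lhp] that .
    show "coeff (char_poly (A 0)) 1 > 0" by (rule char_poly_simple_zero_stable(2)[OF A sing lhp])
    show "\<forall>\<^sub>F t in at_right 0. poly (char_poly (A t)) 0 > 0"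
      using det_pos by (simp add: poly_char_poly_0[OF A])
  qed
  then show ?thesis
    by eventually_elim (use spectral_abscissa_negI[OF A n] eigenvalue_cmat_iff[OF A] in blast)
qed

lemma abs_det_le:
  assumes A: "A \<in> carrier_mat n n" and K: "\<And>i j. i < n \<Longrightarrow> j < n \<Longrightarrow> \<bar>A $$ (i,j)\<bar> \<le> K"
  shows "\<bar>det (A :: 'a::linordered_idom mat)\<bar> \<le> fact n * K^n"
proof -
  have "\<bar>det A\<bar> \<le> (\<Sum>p\<in>{p. p permutes {0..<n}}. \<bar>signof p * (\<Prod>i = 0..<n. A $$ (i, p i))\<bar>)"
    unfolding det_def'[OF A] by (rule sum_abs)
  also have "\<dots> \<le> (\<Sum>p\<in>{p. p permutes {0..<n}}. K^n)"
  proof (rule sum_mono)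
    fix p assume "p \<in> {p. p permutes {0..<n}}"
    then have "i < n \<Longrightarrow> p i < n" for i using permutes_in_image[of p "{0..<n}" i] by simp
    then have "(\<Prod>i = 0..<n. \<bar>A $$ (i, p i)\<bar>) \<le> (\<Prod>i = 0..<n. K)"
      by (intro prod_mono) (auto intro: K)
    then show "\<bar>signof p * (\<Prod>i = 0..<n. A $$ (i, p i))\<bar> \<le> K^n"
      by (cases p rule: sign_cases) (simp_all add: abs_prod)
  qed
  also have "\<dots> = fact n * K^n" by (simp add: card_permutations)
  finally show ?thesis .
qed

lemma mult_diagonal_mult_index:
  assumes "B \<in> carrier_mat n m" "D \<in> carrier_mat m m" "C \<in> carrier_mat m k" "diagonal_mat D"
    and "i < n" "j < k"
  shows "(B * D * C) $$ (i,j) = (\<Sum>l<m. B $$ (i,l) * D $$ (l,l) * C $$ (l,j))"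
proof -
  have BD: "(B * D) $$ (i,l) = B $$ (i,l) * D $$ (l,l)" if "l < m" for l
  proof -
    have "(B * D) $$ (i,l) = (\<Sum>r<m. B $$ (i,r) * D $$ (r,l))"
      using assms that by (simp add: scalar_prod_def lessThan_atLeast0)
    also have "\<dots> = (\<Sum>r<m. if r = l then B $$ (i,l) * D $$ (l,l) else 0)"
      using assms that by (intro sum.cong refl) (auto simp: diagonal_mat_def)
    finally show ?thesis using that by simp
  qed
  define BD where "BD = B * D"
  have "BD \<in> carrier_mat n m" using assms unfolding BD_def by simp
  then have "(BD * C) $$ (i,j) = (\<Sum>l<m. BD $$ (i,l) * C $$ (l,j))"
    using assms by (simp add: scalar_prod_def lessThan_atLeast0)
  then show ?thesis by (simp add: BD BD_def)
qed

lemma Jmat_carrier: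
  assumes "B \<in> carrier_mat n m" "C \<in> carrier_mat m n" "D \<in> carrier_mat m m"
    and "J2 \<in> carrier_mat n n" "J4 \<in> carrier_mat n n"
  shows "Jmat B C J2 J4 D \<kappa> \<in> carrier_mat n n"
  using assms unfolding Jmat_def by auto

lemma Jmat_index:
  assumes "B \<in> carrier_mat n m" "C \<in> carrier_mat m n" "D \<in> carrier_mat m m"
    and "J2 \<in> carrier_mat n n" "J4 \<in> carrier_mat n n" and "i < n" "j < n"
  shows "Jmat B C J2 J4 D \<kappa> $$ (i,j)
    = (B * D * C) $$ (i,j) + \<kappa>^2 * J2 $$ (i,j) + \<kappa>^4 * J4 $$ (i,j)"
  using assms unfolding Jmat_def by auto

lemma abs_uminus_Jmat_index_le:
  assumes B: "B \<in> carrier_mat n m" and C: "C \<in> carrier_mat m n"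
    and J2: "J2 \<in> carrier_mat n n" and J4: "J4 \<in> carrier_mat n n"
    and D: "D \<in> Dset m lo hi" and ij: "i < n" "j < n"
  shows "\<bar>(- Jmat B C J2 J4 D \<kappa>) $$ (i,j)\<bar> \<le> (\<Sum>l<m. \<bar>B $$ (i,l)\<bar> * (\<bar>lo l\<bar> + \<bar>hi l\<bar>) * \<bar>C $$ (l,j)\<bar>)
    + \<kappa>^2 * \<bar>J2 $$ (i,j)\<bar> + \<kappa>^4 * \<bar>J4 $$ (i,j)\<bar>"
proof -
  have Dc: "D \<in> carrier_mat m m" and Dd: "diagonal_mat D"
    and Db: "\<And>l. l < m \<Longrightarrow> \<bar>D $$ (l,l)\<bar> \<le> \<bar>lo l\<bar> + \<bar>hi l\<bar>"
    using D unfolding Dset_def by auto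
  have "\<bar>(B * D * C) $$ (i,j)\<bar> \<le> (\<Sum>l<m. \<bar>B $$ (i,l) * D $$ (l,l) * C $$ (l,j)\<bar>)"
    unfolding mult_diagonal_mult_index[OF B Dc C Dd ij] by (rule sum_abs)
  also have "\<dots> \<le> (\<Sum>l<m. \<bar>B $$ (i,l)\<bar> * (\<bar>lo l\<bar> + \<bar>hi l\<bar>) * \<bar>C $$ (l,j)\<bar>)"
    using Db by (intro sum_mono) (auto simp: abs_mult intro!: mult_right_mono mult_left_mono)
  moreover have "(- Jmat B C J2 J4 D \<kappa>) $$ (i,j) = - Jmat B C J2 J4 D \<kappa> $$ (i,j)"
    using Jmat_carrier[OF B C Dc J2 J4, of \<kappa>] ij by simp
  moreover have "\<bar>\<kappa>^2 * J2 $$ (i,j)\<bar> = \<kappa>^2 * \<bar>J2 $$ (i,j)\<bar>" "\<bar>\<kappa>^4 * J4 $$ (i,j)\<bar> = \<kappa>^4 * \<bar>J4 $$ (i,j)\<bar>"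
    by (simp_all add: abs_mult power_abs power_even_abs_numeral)
  ultimately show ?thesis unfolding Jmat_index[OF B C Dc J2 J4 ij] by linarith
qed

lemma bounded_det_Jmat:
  assumes B: "B \<in> carrier_mat n m" and C: "C \<in> carrier_mat m n"
    and J2: "J2 \<in> carrier_mat n n" and J4: "J4 \<in> carrier_mat n n"
  shows "\<exists>K. \<forall>D\<in>Dset m lo hi. \<bar>det (- Jmat B C J2 J4 D \<kappa>)\<bar> \<le> K"
proof -
  define e where "e i j = (\<Sum>l<m. \<bar>B $$ (i,l)\<bar> * (\<bar>lo l\<bar> + \<bar>hi l\<bar>) * \<bar>C $$ (l,j)\<bar>)
    + \<kappa>^2 * \<bar>J2 $$ (i,j)\<bar> + \<kappa>^4 * \<bar>J4 $$ (i,j)\<bar>" for i j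
  have e0: "e i j \<ge> 0" for i j unfolding e_def by (intro add_nonneg_nonneg sum_nonneg) auto
  have "\<bar>det (- Jmat B C J2 J4 D \<kappa>)\<bar> \<le> fact n * (\<Sum>i<n. \<Sum>j<n. e i j)^n"
    if D: "D \<in> Dset m lo hi" for D
  proof (rule abs_det_le)
    have "D \<in> carrier_mat m m" using D unfolding Dset_def by blast
    then show "- Jmat B C J2 J4 D \<kappa> \<in> carrier_mat n n" using Jmat_carrier[OF B C _ J2 J4] by simp
    fix i j assume ij: "i < n" "j < n"
    have "\<bar>(- Jmat B C J2 J4 D \<kappa>) $$ (i,j)\<bar> \<le> e i j"
      unfolding e_def by (rule abs_uminus_Jmat_index_le[OF B C J2 J4 D ij])
    also have "\<dots> \<le> (\<Sum>i<n. \<Sum>j<n. e i j)"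
      using ij e0 by (intro order_trans[OF member_le_sum[of j] member_le_sum[of i]] sum_nonneg) auto
    finally show "\<bar>(- Jmat B C J2 J4 D \<kappa>) $$ (i,j)\<bar> \<le> (\<Sum>i<n. \<Sum>j<n. e i j)" .
  qed
  then show ?thesis by blast
qed

lemma Psi_minus_le_det:
  assumes "B \<in> carrier_mat n m" "C \<in> carrier_mat m n" "J2 \<in> carrier_mat n n" "J4 \<in> carrier_mat n n"
    and "D \<in> Dset m lo hi"
  shows "Psi_minus m lo hi B C J2 J4 \<kappa> \<le> det (- Jmat B C J2 J4 D \<kappa>)"
proof -
  obtain K where "\<forall>D\<in>Dset m lo hi. \<bar>det (- Jmat B C J2 J4 D \<kappa>)\<bar> \<le> K"
    using bounded_det_Jmat[OF assms(1-4)] by blast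
  then have "bdd_below ((\<lambda>D. det (- Jmat B C J2 J4 D \<kappa>)) ` Dset m lo hi)"
    by (intro bdd_belowI[of _ "- K"]) (force simp: abs_le_iff)
  with imageI[OF assms(5)] show ?thesis unfolding Psi_minus_def by (rule cInf_lower)
qed

lemma det_le_Psi_plus:
  assumes "B \<in> carrier_mat n m" "C \<in> carrier_mat m n" "J2 \<in> carrier_mat n n" "J4 \<in> carrier_mat n n"
    and "D \<in> Dset m lo hi"
  shows "det (- Jmat B C J2 J4 D \<kappa>) \<le> Psi_plus m lo hi B C J2 J4 \<kappa>"
proof -
  obtain K where "\<forall>D\<in>Dset m lo hi. \<bar>det (- Jmat B C J2 J4 D \<kappa>)\<bar> \<le> K"
    using bounded_det_Jmat[OF assms(1-4)] by blast
  then have "bdd_above ((\<lambda>D. det (- Jmat B C J2 J4 D \<kappa>)) ` Dset m lo hi)"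
    by (intro bdd_aboveI[of _ K]) (force simp: abs_le_iff)
  with imageI[OF assms(5)] show ?thesis unfolding Psi_plus_def by (rule cSup_upper)
qed

lemma microphase_separationI:
  assumes "\<forall>\<^sub>F \<kappa> in at_right 0. \<rho> \<kappa> < 0" and "0 < \<kappa>\<^sub>1" "\<rho> \<kappa>\<^sub>1 > 0" "\<kappa>\<^sub>1 < \<kappa>\<^sub>2" "\<rho> \<kappa>\<^sub>2 < 0"
  shows "microphase_separation \<rho>"
proof -
  obtain k where k: "k > 0" "\<And>\<kappa>. 0 < \<kappa> \<Longrightarrow> \<kappa> < k \<Longrightarrow> \<rho> \<kappa> < 0"
    using assms(1) unfolding eventually_at_right_field by auto
  have "0 < min k (\<kappa>\<^sub>1 / 2)" "min k (\<kappa>\<^sub>1 / 2) < \<kappa>\<^sub>1" using k(1) assms(2) by auto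
  moreover have "\<forall>\<kappa>\<in>{0<..<min k (\<kappa>\<^sub>1 / 2)}. \<rho> \<kappa> < 0" using k(2) by auto
  ultimately show ?thesis unfolding microphase_separation_def using assms(3-5) by blast
qed

theorem theorem3:
  fixes n m :: nat and B C J2 J4 :: "real mat" and lo hi :: "nat \<Rightarrow> real"
  assumes n1: "n \<ge> 1" and m1: "m \<ge> 1"
    and B: "B \<in> carrier_mat n m" "\<forall>i<n. \<forall>j<m. B $$ (i,j) \<in> \<int>"
    and C: "C \<in> carrier_mat m n" "\<forall>i<m. \<forall>j<n. C $$ (i,j) \<in> \<int>"
    and bounds: "\<forall>j<m. 0 \<le> lo j \<and> lo j \<le> hi j"
    and J2: "J2 \<in> carrier_mat n n" "transpose_mat J2 = J2"
    and J4: "J4 \<in> carrier_mat n n" "transpose_mat J4 = J4"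
    and A1_sing: "\<forall>D\<in>Dset m lo hi. det (B * D * C) = 0"
    and A1_neg: "\<forall>D\<in>Dset m lo hi. n_neg_eigs (B * D * C) = n - 1"
    and A1_v: "\<exists>v\<in>carrier_vec n. v \<noteq> 0\<^sub>v n \<and> (\<forall>i<n. v $ i \<ge> 0) \<and> transpose_mat B *\<^sub>v v = 0\<^sub>v m"
    and A2_J2: "indefinite_mat n J2"
    and A2_J4: "neg_semidef n J4"
    and A2_kbar: "\<exists>kb. neg_def n ((kb^2) \<cdot>\<^sub>m J2 + (kb^4) \<cdot>\<^sub>m J4)"
    and Psi_minus_ip: "initially_positive (Psi_minus m lo hi B C J2 J4)"
    and Psi_plus_nsc: "negative_sign_change (Psi_plus m lo hi B C J2 J4)"
  shows "\<forall>D\<in>Dset m lo hi.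
           microphase_separation (\<lambda>\<kappa>. spectral_abscissa (Jmat B C J2 J4 D \<kappa>))"
proof
  fix D assume D: "D \<in> Dset m lo hi"
  then have Dc: "D \<in> carrier_mat m m" unfolding Dset_def by blast
  let ?J = "Jmat B C J2 J4 D"
  have J: "?J \<kappa> \<in> carrier_mat n n" for \<kappa> by (rule Jmat_carrier[OF B(1) C(1) Dc J2(1) J4(1)])
  note J_index = Jmat_index[OF B(1) C(1) Dc J2(1) J4(1)]
  have "?J 0 = B * D * C" using J B(1) C(1) Dc by (intro eq_matI) (auto simp: J_index)
  moreover have "isCont (\<lambda>\<kappa>. ?J \<kappa> $$ (i,j)) 0" if "i < n" "j < n" for i j
    unfolding J_index[OF that] by (intro continuous_intros)
  moreover have "\<forall>\<^sub>F \<kappa> in at_right 0. det (- ?J \<kappa>) > 0"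
    using Psi_minus_ip Psi_minus_le_det[OF B(1) C(1) J2(1) J4(1) D]
    unfolding initially_positive_def eventually_at_right_field
    by (meson greaterThanLessThan_iff less_le_trans)
  ultimately have stable_small: "\<forall>\<^sub>F \<kappa> in at_right 0. spectral_abscissa (?J \<kappa>) < 0"
    using A1_sing A1_neg D by (intro eventually_spectral_abscissa_neg_at_right_0[OF n1 J]) auto
  obtain k1 k2 where k: "0 \<le> k1" "k1 < k2" "Psi_plus m lo hi B C J2 J4 k2 < 0"
    using Psi_plus_nsc unfolding negative_sign_change_def by blast
  then have unstable: "spectral_abscissa (?J k2) > 0"
    using det_le_Psi_plus[OF B(1) C(1) J2(1) J4(1) D, of k2]
    by (intro spectral_abscissa_pos_if_det_neg[OF J]) linarith
  obtain kb where "neg_def n ((kb^2) \<cdot>\<^sub>m J2 + (kb^4) \<cdot>\<^sub>m J4)" using A2_kbar by blast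
  from neg_def_at_large_kappa[OF _ J2(1) J4(1) n1 A2_J4 this, of "B * D * C" k2]
  obtain k3 where "k3 > k2" "neg_def n (?J k3)" using B(1) C(1) Dc unfolding Jmat_def by auto
  with spectral_abscissa_neg_if_neg_def[OF J n1]
  show "microphase_separation (\<lambda>\<kappa>. spectral_abscissa (?J \<kappa>))"
    using stable_small k unstable by (intro microphase_separationI) auto
qed

end
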